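(* Let $q>0$ and let $\{|n_q\rangle\}_{n\ge0}$ be the orthonormal basis of $ML^2(\mathbb{C}\setminus\mathbb{R}_-;q)$ given by \[ |n_q\rangle(z)=\frac{z^{qn}}{\sqrt{\Gamma(qn+1)}}. \] Then: <ol> <li>Each $|n_q\rangle$ lies in the domain of $a^\dagger a$.</li> <li>We have \[ a^\dagger a|n_q\rangle=\begin{cases}\dfrac{\Gamma(qn+1)}{\Gamma(q(n-1)+1)}\,|n_q\rangle, & n\ge1,\\[2mm] 0, & n=0.\end{cases} \]</li> <li>The operator $a^\dagger a$, defined on the linear span of $\{|n_q\rangle\}$ by these relations, extends to a positive self-adjoint operator, again denoted $a^\dagger a$, on its maximal domain.</li> <li>If $f(z)=\sum_{n=0}^\infty a_n z^{qn}$ belongs to $ML^2(\mathbb{C}\setminus\mathbb{R}_-;q)$ and to the domain of $a^\dagger a$, then \[ (a^\dagger a f)(z)=\sum_{n=1}^\infty a_n\frac{\Gamma(qn+1)}{\Gamma(q(n-1)+1)}\,z^{qn}. \]</li> </ol>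
   Context: Fix $q>0$. The Mittag-Leffler space of the slitted plane is \[ ML^2(\mathbb{C}\setminus\mathbb{R}_-;q)=\Big\{f:\mathbb{C}\setminus\mathbb{R}_-\to\mathbb{C},\ f(z)=\sum_{n\ge0}a_nz^{qn}\ :\ \sum_{n\ge0}|a_n|^2\Gamma(qn+1)<\infty\Big\}, \] with the principal branch of $z^{qn}$ on $\mathbb{C}\setminus(-\infty,0]$. Its scalar product is \[ \langle f,g\rangle=\sum_{n\ge0}\overline{a_n}\,b_n\,\Gamma(qn+1) \] for $f=\sum a_nz^{qn}$ and $g=\sum b_nz^{qn}$. For $f=\sum a_n z^{qn}$, the Caputo fractional derivative of order $q$ is \[ D^q_*f(z)=\sum_{n\ge1}a_n\frac{\Gamma(qn+1)}{\Gamma(q(n-1)+1)}z^{q(n-1)}, \] defined whenever $\sum_{n\ge1}|a_n|^2\,\big|\Gamma(qn+1)/\Gamma(q(n-1)+1)\big|^2<\infty$. The creation and annihilation operators are defined as follows: <ul> <li>$a^\dagger f=z^q f$ on $\operatorname{Dom}(a^\dagger)=\{f\in ML^2(\mathbb{C}\setminus\mathbb{R}_-;q): z^qf\in ML^2(\mathbb{C}\setminus\mathbb{R}_-;q)\}$;</li> <li>$af=D^q_*f$ on $\operatorname{Dom}(a)=\{f\in ML^2(\mathbb{C}\setminus\mathbb{R}_-;q): D^q_*f\in ML^2(\mathbb{C}\setminus\mathbb{R}_-;q)\}$.</li> </ul> These are closed, densely defined and mutually adjoint. The operator $a^\dagger a$ is defined on $\{f\in\operatorname{Dom}(a): af\in\operatorname{Dom}(a^\dagger)\}$.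 *)

theory Defs
  imports "HOL-Analysis.Analysis"
begin

definition slit :: "complex set" where
  "slit = {z. \<not> (Im z = 0 \<and> Re z \<le> 0)}"

definition wt :: "real \<Rightarrow> nat \<Rightarrow> real" where
  "wt q n = Gamma (q * real n + 1)"

text \<open>Principal branch power z^(qn) (complex powr uses the principal logarithm).\<close>
definition zq :: "real \<Rightarrow> nat \<Rightarrow> complex \<Rightarrow> complex" where
  "zq q n z = z powr (complex_of_real (q * real n))"

definition mlser :: "real \<Rightarrow> (nat \<Rightarrow> complex) \<Rightarrow> complex \<Rightarrow> complex" where
  "mlser q a = (\<lambda>z. if z \<in> slit then (\<Sum>n. a n * zq q n z) else 0)"

definition ML2coef :: "real \<Rightarrow> (nat \<Rightarrow> complex) \<Rightarrow> bool" where
  "ML2coef q a \<longleftrightarrow> summable (\<lambda>n. (cmod (a n))\<^sup>2 * wt q n)"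

definition ML2 :: "real \<Rightarrow> (complex \<Rightarrow> complex) set" where
  "ML2 q = {f. \<exists>a. ML2coef q a \<and> f = mlser q a}"

definition coef :: "real \<Rightarrow> (complex \<Rightarrow> complex) \<Rightarrow> nat \<Rightarrow> complex" where
  "coef q f = (THE a. ML2coef q a \<and> f = mlser q a)"

definition ml_inner :: "real \<Rightarrow> (complex \<Rightarrow> complex) \<Rightarrow> (complex \<Rightarrow> complex) \<Rightarrow> complex" where
  "ml_inner q f g = (\<Sum>n. cnj (coef q f n) * coef q g n * complex_of_real (wt q n))"

definition ml_norm :: "real \<Rightarrow> (complex \<Rightarrow> complex) \<Rightarrow> real" where
  "ml_norm q f = sqrt (Re (ml_inner q f f))"

text \<open>Gamma(qn+1)/Gamma(q(n-1)+1), used for n >= 1 only.\<close>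
definition lam :: "real \<Rightarrow> nat \<Rightarrow> real" where
  "lam q n = Gamma (q * real n + 1) / Gamma (q * (real n - 1) + 1)"

text \<open>Caputo fractional derivative of order q (on coefficients).\<close>
definition caputo :: "real \<Rightarrow> (complex \<Rightarrow> complex) \<Rightarrow> complex \<Rightarrow> complex" where
  "caputo q f = mlser q (\<lambda>n. coef q f (Suc n) * complex_of_real (lam q (Suc n)))"

definition dom_a :: "real \<Rightarrow> (complex \<Rightarrow> complex) set" where
  "dom_a q = {f \<in> ML2 q.
     summable (\<lambda>n. (cmod (coef q f (Suc n)))\<^sup>2 * (lam q (Suc n))\<^sup>2) \<and>
     ML2coef q (\<lambda>n. coef q f (Suc n) * complex_of_real (lam q (Suc n)))}"

definition op_a :: "real \<Rightarrow> (complex \<Rightarrow> complex) \<Rightarrow> complex \<Rightarrow> complex" where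
  "op_a q f = caputo q f"

definition op_adag :: "real \<Rightarrow> (complex \<Rightarrow> complex) \<Rightarrow> complex \<Rightarrow> complex" where
  "op_adag q f = (\<lambda>z. z powr (complex_of_real q) * f z)"

definition dom_adag :: "real \<Rightarrow> (complex \<Rightarrow> complex) set" where
  "dom_adag q = {f \<in> ML2 q. op_adag q f \<in> ML2 q}"

definition dom_NN :: "real \<Rightarrow> (complex \<Rightarrow> complex) set" where
  "dom_NN q = {f \<in> dom_a q. op_a q f \<in> dom_adag q}"

definition op_NN :: "real \<Rightarrow> (complex \<Rightarrow> complex) \<Rightarrow> complex \<Rightarrow> complex" where
  "op_NN q f = op_adag q (op_a q f)"

definition ket :: "real \<Rightarrow> nat \<Rightarrow> complex \<Rightarrow> complex" where
  "ket q n = (\<lambda>z. if z \<in> slit then zq q n z / complex_of_real (sqrt (Gamma (q * real n + 1))) else 0)"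

definition ket_span :: "real \<Rightarrow> (complex \<Rightarrow> complex) set" where
  "ket_span q = {(\<lambda>z. \<Sum>k<N. c k * ket q k z) | N c. True}"

definition lin_op :: "real \<Rightarrow> (complex \<Rightarrow> complex) set \<Rightarrow> ((complex \<Rightarrow> complex) \<Rightarrow> complex \<Rightarrow> complex) \<Rightarrow> bool" where
  "lin_op q D T \<longleftrightarrow> D \<subseteq> ML2 q \<and> (\<lambda>z. 0) \<in> D \<and>
     (\<forall>f\<in>D. \<forall>g\<in>D. (\<lambda>z. f z + g z) \<in> D \<and> T (\<lambda>z. f z + g z) = (\<lambda>z. T f z + T g z)) \<and>
     (\<forall>f\<in>D. \<forall>c. (\<lambda>z. c * f z) \<in> D \<and> T (\<lambda>z. c * f z) = (\<lambda>z. c * T f z)) \<and>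
     (\<forall>f\<in>D. T f \<in> ML2 q)"

definition self_adjoint :: "real \<Rightarrow> (complex \<Rightarrow> complex) set \<Rightarrow> ((complex \<Rightarrow> complex) \<Rightarrow> complex \<Rightarrow> complex) \<Rightarrow> bool" where
  "self_adjoint q D T \<longleftrightarrow> lin_op q D T \<and>
     (\<forall>f\<in>ML2 q. \<forall>e>0. \<exists>g\<in>D. ml_norm q (\<lambda>z. f z - g z) < e) \<and>
     (\<forall>f\<in>D. \<forall>g\<in>D. ml_inner q (T f) g = ml_inner q f (T g)) \<and>
     (\<forall>g\<in>ML2 q. \<forall>h\<in>ML2 q. (\<forall>f\<in>D. ml_inner q (T f) g = ml_inner q f h) \<longrightarrow> g \<in> D \<and> T g = h)"

definition positive_op :: "real \<Rightarrow> (complex \<Rightarrow> complex) set \<Rightarrow> ((complex \<Rightarrow> complex) \<Rightarrow> complex \<Rightarrow> complex) \<Rightarrow> bool" where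
  "positive_op q D T \<longleftrightarrow> (\<forall>f\<in>D. Im (ml_inner q f (T f)) = 0 \<and> Re (ml_inner q f (T f)) \<ge> 0)"

definition max_dom :: "real \<Rightarrow> (complex \<Rightarrow> complex) set" where
  "max_dom q = {f \<in> ML2 q. ML2coef q (\<lambda>n. coef q f n * complex_of_real (if n = 0 then 0 else lam q n))}"

end

theory Submission
  imports Defs "HOL-Real_Asymp.Real_Asymp" "HOL-Complex_Analysis.Conformal_Mappings"
begin

text \<open>
  In terms of the coefficients \<open>a\<^sub>n\<close> of \<open>f = \<Sum> a\<^sub>n z\<^bsup>qn\<^esup>\<close>, the space is a weighted \<open>\<ell>\<^sup>2\<close> space
  with weights \<open>\<Gamma>(qn+1)\<close>; the annihilation operator lowers the index and multiplies by
  \<open>\<lambda>\<^sub>n = \<Gamma>(qn+1)/\<Gamma>(q(n-1)+1)\<close>, the creation operator raises it, so \<open>a\<^sup>\<dagger>a\<close> multiplies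
  \<open>a\<^sub>n\<close> by \<open>\<lambda>\<^sub>n\<close> (and \<open>a\<^sub>0\<close> by 0). Multiplication by a nonnegative real sequence is
  self-adjoint and positive on its maximal domain, and this is checked coefficientwise.

  The analytic input is that \<open>\<Gamma>(x+q)/\<Gamma>(x) \<rightarrow> \<infinity>\<close>, by log-convexity of \<open>\<Gamma>\<close>. Hence the
  weights outgrow every geometric sequence, every admissible coefficient sequence defines
  an entire power series in \<open>w = z\<^sup>q\<close>, and by the identity theorem the coefficients of a
  function are unique. The same growth makes the weights eventually increasing, so lowering
  the index preserves square summability, and the domain of \<open>a\<^sup>\<dagger>a\<close> is the maximal one.
\<close>

section \<open>Growth of the weights\<close>

lemma Gamma_Wendel_lower_bound:
  fixes q x :: real
  assumes "0 < q" "q \<le> 1" "0 < x"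
  shows "x * Gamma x \<le> (x + q) powr (1 - q) * Gamma (x + q)"
proof -
  have pos: "0 < Gamma x" "0 < Gamma (x + q)"
    using assms by auto
  have "Gamma (x + 1) = x * Gamma x" "Gamma (x + q + 1) = (x + q) * Gamma (x + q)"
    using assms by (auto intro!: Gamma_plus1 elim!: nonpos_Ints_cases)
  then have ln_shift: "ln (Gamma (x + 1)) = ln x + ln (Gamma x)"
      "ln (Gamma (x + q + 1)) = ln (x + q) + ln (Gamma (x + q))"
    using assms by (simp_all add: ln_mult_pos)
  have point: "(1 - (1 - q)) *\<^sub>R (x + q) + (1 - q) *\<^sub>R (x + q + 1) = x + 1"
    by (simp add: algebra_simps)
  have "ln (Gamma (x + 1)) \<le> q * ln (Gamma (x + q)) + (1 - q) * ln (Gamma (x + q + 1))"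
    using convex_onD[OF log_convex_Gamma_real, of "1 - q" "x + q" "x + q + 1", unfolded point] assms
    by simp
  then have "ln x + ln (Gamma x) \<le> ln (Gamma (x + q)) + (1 - q) * ln (x + q)"
    unfolding ln_shift by (simp add: algebra_simps)
  then have "exp (ln x + ln (Gamma x)) \<le> exp (ln (Gamma (x + q)) + (1 - q) * ln (x + q))"
    by simp
  then show ?thesis
    using assms pos by (simp add: exp_add powr_def mult.commute)
qed

lemma Gamma_shift_ratio_at_top:
  fixes q :: real
  assumes "0 < q"
  shows "filterlim (\<lambda>x. Gamma (x + q) / Gamma x) at_top at_top"
proof (cases "q < 1")
  case True
  have "filterlim (\<lambda>x::real. x / (x + q) powr (1 - q)) at_top at_top"
    using assms True by real_asymp
  moreover have "\<forall>\<^sub>F x in at_top. x / (x + q) powr (1 - q) \<le> Gamma (x + q) / Gamma x"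
    using eventually_gt_at_top[of 0]
  proof eventually_elim
    case (elim x)
    then show ?case
      using Gamma_Wendel_lower_bound[of q x] assms True by (simp add: field_simps)
  qed
  ultimately show ?thesis
    by (rule filterlim_at_top_mono)
next
  case False
  have "\<forall>\<^sub>F x in at_top. x \<le> Gamma (x + q) / Gamma x"
    using eventually_ge_at_top[of "3/2"]
  proof eventually_elim
    case (elim x)
    have "x * Gamma x = Gamma (x + 1)"
      using elim by (auto intro!: Gamma_plus1[symmetric] elim!: nonpos_Ints_cases)
    also have "\<dots> \<le> Gamma (x + q)"
      using elim False by (cases "q = 1") (auto intro!: less_imp_le Gamma_real_strict_mono)
    finally show ?case
      using elim by (simp add: field_simps)
  qed
  then show ?thesis
    by (rule filterlim_at_top_mono[OF filterlim_ident])
qed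

lemma Gamma_ge_one:
  fixes x :: real
  assumes "2 \<le> x"
  shows "1 \<le> Gamma x"
proof -
  have "Gamma (2 :: real) = 1"
    using Gamma_fact[of 1] by (simp add: numeral_2_eq_2)
  then show ?thesis
    using assms Gamma_real_strict_mono[of 2 x] by (cases "x = 2") auto
qed

lemma wt_pos: "0 < q \<Longrightarrow> 0 < wt q n"
  unfolding wt_def by (intro Gamma_real_pos add_nonneg_pos mult_nonneg_nonneg) auto

lemma wt_Suc: "wt q (Suc n) = Gamma (q * real n + 1 + q)"
  unfolding wt_def by (simp add: algebra_simps)

lemma wt_Suc_ratio_at_top:
  assumes "0 < q"
  shows "filterlim (\<lambda>n. wt q (Suc n) / wt q n) at_top sequentially"
proof -
  have "filterlim (\<lambda>n. q * real n + 1) at_top sequentially"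
    using assms by real_asymp
  then show ?thesis
    unfolding wt_Suc by (subst wt_def) (rule filterlim_compose[OF Gamma_shift_ratio_at_top[OF assms]])
qed

lemma eventually_wt_le_wt_Suc:
  assumes "0 < q"
  shows "\<forall>\<^sub>F n in sequentially. wt q n \<le> wt q (Suc n)"
  using filterlim_at_top_dense[THEN iffD1, OF wt_Suc_ratio_at_top[OF assms], rule_format, of 1]
  by eventually_elim (use wt_pos[OF assms] in \<open>auto simp: field_simps\<close>)

lemma eventually_one_le_wt:
  assumes "0 < q"
  shows "\<forall>\<^sub>F n in sequentially. 1 \<le> wt q n"
proof -
  have "filterlim (\<lambda>n. q * real n + 1) at_top sequentially"
    using assms by real_asymp
  then have "\<forall>\<^sub>F n in sequentially. 2 \<le> q * real n + 1"
    unfolding filterlim_at_top by blast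
  then show ?thesis
    by eventually_elim (simp add: wt_def Gamma_ge_one)
qed

lemma summable_power_div_wt:
  fixes R :: real
  assumes "0 < q"
  shows "summable (\<lambda>n. R ^ n / wt q n)"
proof -
  obtain N where N: "\<And>n. N \<le> n \<Longrightarrow> 2 * \<bar>R\<bar> \<le> wt q (Suc n) / wt q n"
    using filterlim_at_top[THEN iffD1, OF wt_Suc_ratio_at_top[OF assms], rule_format, of "2 * \<bar>R\<bar>"]
    unfolding eventually_sequentially by blast
  show ?thesis
  proof (rule summable_ratio_test[of "1/2" N])
    fix n assume "N \<le> n"
    then have "\<bar>R\<bar> * wt q n \<le> 1/2 * wt q (Suc n)"
      using N[of n] wt_pos[OF assms, of n] by (simp add: field_simps)
    then have "\<bar>R\<bar> * wt q n * \<bar>R\<bar> ^ n \<le> 1/2 * wt q (Suc n) * \<bar>R\<bar> ^ n"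
      by (intro mult_right_mono) auto
    then show "norm (R ^ Suc n / wt q (Suc n)) \<le> 1/2 * norm (R ^ n / wt q n)"
      using wt_pos[OF assms, of n] wt_pos[OF assms, of "Suc n"]
      by (simp add: field_simps abs_mult power_abs)
  qed simp
qed

section \<open>Coefficient sequences\<close>

lemma mult_le_weighted_squares:
  fixes x y g :: real
  assumes "0 < g"
  shows "x * y \<le> (x\<^sup>2 * g + y\<^sup>2 / g) / 2"
proof -
  have "0 \<le> (x * g - y)\<^sup>2 / g"
    using assms by simp
  also have "\<dots> = x\<^sup>2 * g - 2 * x * y + y\<^sup>2 / g"
    using assms by (simp add: power2_eq_square field_simps)
  finally show ?thesis
    by simp
qed

lemma ML2coef_summable_powser:
  fixes w :: complex
  assumes q: "0 < q" and a: "ML2coef q a"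
  shows "summable (\<lambda>n. a n * w ^ n)"
proof -
  have "summable (\<lambda>n. ((cmod (a n))\<^sup>2 * wt q n + (norm w ^ 2) ^ n / wt q n) / 2)"
    using a summable_power_div_wt[OF q] unfolding ML2coef_def
    by (intro summable_divide summable_add)
  then have "summable (\<lambda>n. norm (a n * w ^ n))"
  proof (rule summable_comparison_test'[where N = 0])
    fix n
    have "(norm w ^ n)\<^sup>2 = (norm w ^ 2) ^ n"
      by (simp flip: power_mult add: mult.commute)
    then show "norm (norm (a n * w ^ n)) \<le> ((cmod (a n))\<^sup>2 * wt q n + (norm w ^ 2) ^ n / wt q n) / 2"
      using mult_le_weighted_squares[OF wt_pos[OF q], of "cmod (a n)" "norm w ^ n" n]
      by (simp add: norm_mult norm_power)
  qed
  then show ?thesis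
    by (rule summable_norm_cancel)
qed

lemma ML2coef_add:
  assumes q: "0 < q" and "ML2coef q a" "ML2coef q b"
  shows "ML2coef q (\<lambda>n. a n + b n)"
proof -
  have "summable (\<lambda>n. 2 * ((cmod (a n))\<^sup>2 * wt q n) + 2 * ((cmod (b n))\<^sup>2 * wt q n))"
    using assms unfolding ML2coef_def by (intro summable_add summable_mult)
  then show ?thesis
    unfolding ML2coef_def
  proof (rule summable_comparison_test'[where N = 0])
    fix n
    have "(cmod (a n + b n))\<^sup>2 \<le> (cmod (a n) + cmod (b n))\<^sup>2"
      by (intro power_mono norm_triangle_ineq) auto
    also have "\<dots> \<le> 2 * (cmod (a n))\<^sup>2 + 2 * (cmod (b n))\<^sup>2"
      using mult_le_weighted_squares[of 1 "cmod (a n)" "cmod (b n)"]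
      by (simp add: power2_sum)
    finally show "norm ((cmod (a n + b n))\<^sup>2 * wt q n) \<le> 2 * ((cmod (a n))\<^sup>2 * wt q n) + 2 * ((cmod (b n))\<^sup>2 * wt q n)"
      using wt_pos[OF q, of n] by (simp add: mult_right_mono flip: distrib_right mult.assoc)
  qed
qed

lemma ML2coef_cmult:
  assumes "ML2coef q a"
  shows "ML2coef q (\<lambda>n. c * a n)"
proof -
  have "summable (\<lambda>n. (cmod c)\<^sup>2 * ((cmod (a n))\<^sup>2 * wt q n))"
    using assms unfolding ML2coef_def by (intro summable_mult)
  then show ?thesis
    unfolding ML2coef_def by (simp add: norm_mult power_mult_distrib mult.assoc)
qed

lemma ML2coef_diff:
  "0 < q \<Longrightarrow> ML2coef q a \<Longrightarrow> ML2coef q b \<Longrightarrow> ML2coef q (\<lambda>n. a n - b n)"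
  using ML2coef_add[of q a "\<lambda>n. (-1) * b n"] ML2coef_cmult[of q b "-1"] by simp

lemma ML2coef_finite_support:
  assumes "\<And>n. N \<le> n \<Longrightarrow> a n = 0"
  shows "ML2coef q a"
  unfolding ML2coef_def
  by (rule summable_comparison_test'[where N = N and g = "\<lambda>_. 0"]) (use assms in auto)

lemma ML2coef_Suc:
  assumes q: "0 < q" and b: "ML2coef q b"
  shows "ML2coef q (\<lambda>n. b (Suc n))"
  unfolding ML2coef_def
proof (rule summable_comparison_test_ev)
  show "summable (\<lambda>n. (cmod (b (Suc n)))\<^sup>2 * wt q (Suc n))"
    using b unfolding ML2coef_def by (rule summable_Suc_iff[THEN iffD2])
  show "\<forall>\<^sub>F n in sequentially. norm ((cmod (b (Suc n)))\<^sup>2 * wt q n) \<le> (cmod (b (Suc n)))\<^sup>2 * wt q (Suc n)"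
    using eventually_wt_le_wt_Suc[OF q]
  proof eventually_elim
    case (elim n)
    then show ?case
      using wt_pos[OF q, of n] by (simp add: abs_mult mult_left_mono)
  qed
qed

lemma ML2coef_summable_sq:
  assumes q: "0 < q" and b: "ML2coef q b"
  shows "summable (\<lambda>n. (cmod (b n))\<^sup>2)"
proof (rule summable_comparison_test_ev)
  show "summable (\<lambda>n. (cmod (b n))\<^sup>2 * wt q n)"
    using b unfolding ML2coef_def .
  show "\<forall>\<^sub>F n in sequentially. norm ((cmod (b n))\<^sup>2) \<le> (cmod (b n))\<^sup>2 * wt q n"
    using eventually_one_le_wt[OF q]
  proof eventually_elim
    case (elim n)
    then show ?case
      using mult_left_mono[OF elim, of "(cmod (b n))\<^sup>2"] by simp
  qed
qed

lemma ML2coef_summable_inner: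
  assumes q: "0 < q" and "ML2coef q a" "ML2coef q b"
  shows "summable (\<lambda>n. cnj (a n) * b n * complex_of_real (wt q n))"
proof -
  have "summable (\<lambda>n. ((cmod (a n))\<^sup>2 * wt q n + (cmod (b n))\<^sup>2 * wt q n) / 2)"
    using assms unfolding ML2coef_def by (intro summable_divide summable_add)
  then have "summable (\<lambda>n. norm (cnj (a n) * b n * complex_of_real (wt q n)))"
  proof (rule summable_comparison_test'[where N = 0])
    fix n
    have "cmod (a n) * cmod (b n) * wt q n \<le> ((cmod (a n))\<^sup>2 + (cmod (b n))\<^sup>2) / 2 * wt q n"
      using mult_le_weighted_squares[of 1 "cmod (a n)" "cmod (b n)"] wt_pos[OF q, of n]
      by (intro mult_right_mono) auto
    then show "norm (norm (cnj (a n) * b n * complex_of_real (wt q n)))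
        \<le> ((cmod (a n))\<^sup>2 * wt q n + (cmod (b n))\<^sup>2 * wt q n) / 2"
      using wt_pos[OF q, of n] by (simp add: norm_mult algebra_simps)
  qed
  then show ?thesis
    by (rule summable_norm_cancel)
qed

lemma zq_eq_power:
  assumes "z \<noteq> 0"
  shows "zq q n z = (z powr complex_of_real q) ^ n"
proof -
  have "exp (complex_of_real q * (of_nat n * Ln z)) = exp (of_nat n * (complex_of_real q * Ln z))"
    by (simp only: mult.left_commute)
  then show ?thesis
    using assms unfolding zq_def powr_def by (simp add: exp_of_nat_mult[symmetric] mult.assoc)
qed

lemma mlser_eq_powser:
  assumes "z \<in> slit"
  shows "mlser q a z = (\<Sum>n. a n * (z powr complex_of_real q) ^ n)"
proof -
  have "z \<noteq> 0"
    using assms by (auto simp: slit_def)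
  then show ?thesis
    using assms by (simp add: mlser_def zq_eq_power)
qed

lemma powser_eq_zero_if_zero_on_pos_reals:
  fixes c :: "nat \<Rightarrow> complex"
  assumes summable: "\<And>w. summable (\<lambda>n. c n * w ^ n)"
    and zero: "\<And>t. 0 < t \<Longrightarrow> (\<Sum>n. c n * complex_of_real t ^ n) = 0"
  shows "c n = 0"
proof -
  have radius: "fps_conv_radius (Abs_fps c) = \<infinity>"
    unfolding fps_conv_radius_def by (simp add: conv_radius_inftyI'' summable)
  have limpt: "0 islimpt (complex_of_real ` {0<..})"
  proof (rule islimpt_approachable[THEN iffD2], intro allI impI)
    fix e :: real assume "0 < e"
    then show "\<exists>x'\<in>complex_of_real ` {0<..}. x' \<noteq> 0 \<and> dist x' 0 < e"
      by (intro bexI[of _ "complex_of_real (e / 2)"] imageI) auto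
  qed
  have "eval_fps (Abs_fps c) w = 0" for w
  proof (rule analytic_continuation[where f = "eval_fps (Abs_fps c)" and S = UNIV
      and U = "complex_of_real ` {0<..}" and \<xi> = 0])
    show "eval_fps (Abs_fps c) holomorphic_on UNIV"
      using radius by (intro holomorphic_on_eval_fps) simp
    show "eval_fps (Abs_fps c) z = 0" if "z \<in> complex_of_real ` {0<..}" for z
      using that zero by (auto simp: eval_fps_def)
  qed (use limpt in auto)
  then have "Abs_fps c = 0"
    by (intro eval_fps_eqD) (simp_all add: radius)
  then show ?thesis
    by (metis fps_nth_Abs_fps fps_zero_nth)
qed

lemma pos_real_root_in_slit:
  fixes t :: real
  assumes "0 < q" "0 < t"
  shows "complex_of_real (t powr (1 / q)) \<in> slit"
    and "complex_of_real (t powr (1 / q)) powr complex_of_real q = complex_of_real t"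
proof -
  show "complex_of_real (t powr (1 / q)) \<in> slit"
    using assms by (simp add: slit_def)
  have "complex_of_real (t powr (1 / q)) powr complex_of_real q = complex_of_real ((t powr (1 / q)) powr q)"
    using assms by (intro powr_of_real) simp
  then show "complex_of_real (t powr (1 / q)) powr complex_of_real q = complex_of_real t"
    using assms by (simp add: powr_powr)
qed

lemma mlser_inject:
  assumes q: "0 < q" and a: "\<And>w. summable (\<lambda>n. a n * w ^ n)" and b: "\<And>w. summable (\<lambda>n. b n * w ^ n)"
    and eq: "mlser q a = mlser q b"
  shows "a = b"
proof -
  have "a n - b n = 0" for n
  proof (rule powser_eq_zero_if_zero_on_pos_reals)
    show "summable (\<lambda>n. (a n - b n) * w ^ n)" for w
      using summable_diff[OF a b] by (simp add: left_diff_distrib)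
    fix t :: real assume "0 < t"
    define z where "z = complex_of_real (t powr (1 / q))"
    have z: "z \<in> slit" "z powr complex_of_real q = complex_of_real t"
      unfolding z_def using pos_real_root_in_slit[OF q \<open>0 < t\<close>] by auto
    have "(\<Sum>n. a n * complex_of_real t ^ n) = (\<Sum>n. b n * complex_of_real t ^ n)"
      using fun_cong[OF eq, of z] mlser_eq_powser[OF z(1)] z(2) by simp
    moreover have "(\<Sum>n. (a n - b n) * complex_of_real t ^ n)
        = (\<Sum>n. a n * complex_of_real t ^ n) - (\<Sum>n. b n * complex_of_real t ^ n)"
      unfolding left_diff_distrib by (rule suminf_diff[OF a b, symmetric])
    ultimately show "(\<Sum>n. (a n - b n) * complex_of_real t ^ n) = 0"
      by simp
  qed
  then show ?thesis
    by auto
qed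

lemma coef_mlser:
  assumes q: "0 < q" and a: "ML2coef q a"
  shows "coef q (mlser q a) = a"
  unfolding coef_def
proof (rule the_equality)
  show "ML2coef q a \<and> mlser q a = mlser q a"
    using a by simp
  show "b = a" if "ML2coef q b \<and> mlser q a = mlser q b" for b
    using mlser_inject[OF q ML2coef_summable_powser[OF q] ML2coef_summable_powser[OF q a]] that
    by metis
qed

lemma ML2_coefD:
  assumes q: "0 < q" and f: "f \<in> ML2 q"
  shows "ML2coef q (coef q f)" and "f = mlser q (coef q f)"
proof -
  obtain a where "ML2coef q a" "f = mlser q a"
    using f unfolding ML2_def by auto
  then show "ML2coef q (coef q f)" "f = mlser q (coef q f)"
    using coef_mlser[OF q] by auto
qed

lemma ML2I: "ML2coef q a \<Longrightarrow> mlser q a \<in> ML2 q"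
  unfolding ML2_def by auto

lemma mlser_add:
  assumes q: "0 < q" and a: "ML2coef q a" and b: "ML2coef q b"
  shows "mlser q (\<lambda>n. a n + b n) = (\<lambda>z. mlser q a z + mlser q b z)"
proof
  fix z
  show "mlser q (\<lambda>n. a n + b n) z = mlser q a z + mlser q b z"
    using suminf_add[OF ML2coef_summable_powser[OF q a] ML2coef_summable_powser[OF q b]]
    by (cases "z \<in> slit") (simp_all add: mlser_eq_powser distrib_right, simp add: mlser_def)
qed

lemma mlser_cmult:
  assumes q: "0 < q" and a: "ML2coef q a"
  shows "mlser q (\<lambda>n. c * a n) = (\<lambda>z. c * mlser q a z)"
proof
  fix z
  show "mlser q (\<lambda>n. c * a n) z = c * mlser q a z"
    using suminf_mult[OF ML2coef_summable_powser[OF q a], of c]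
    by (cases "z \<in> slit") (simp_all add: mlser_eq_powser mult.assoc, simp add: mlser_def)
qed

lemma mlser_diff:
  assumes q: "0 < q" and a: "ML2coef q a" and b: "ML2coef q b"
  shows "mlser q (\<lambda>n. a n - b n) = (\<lambda>z. mlser q a z - mlser q b z)"
  using mlser_add[OF q a ML2coef_cmult[OF b, of "-1"]] mlser_cmult[OF q b, of "-1"] by simp

lemma ml_norm_mlser:
  assumes q: "0 < q" and a: "ML2coef q a"
  shows "ml_norm q (mlser q a) = sqrt (\<Sum>n. (cmod (a n))\<^sup>2 * wt q n)"
proof -
  have "(\<lambda>n. cnj (a n) * a n * complex_of_real (wt q n)) = (\<lambda>n. complex_of_real ((cmod (a n))\<^sup>2 * wt q n))"
    by (simp only: of_real_mult complex_norm_square mult.commute)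
  then have "ml_inner q (mlser q a) (mlser q a) = (\<Sum>n. complex_of_real ((cmod (a n))\<^sup>2 * wt q n))"
    unfolding ml_inner_def coef_mlser[OF q a] by simp
  also have "\<dots> = complex_of_real (\<Sum>n. (cmod (a n))\<^sup>2 * wt q n)"
    using a unfolding ML2coef_def by (rule suminf_of_real[symmetric])
  finally show ?thesis
    unfolding ml_norm_def by simp
qed

section \<open>The number operator on coefficients\<close>

text \<open>The eigenvalue of the \<open>n\<close>-th basis vector is \<open>lam q n\<close> for \<open>n \<ge> 1\<close> and \<open>0\<close> for
  \<open>n = 0\<close>; the value \<open>lam q 0\<close> itself is meaningless.\<close>

definition number_coef :: "real \<Rightarrow> (nat \<Rightarrow> complex) \<Rightarrow> nat \<Rightarrow> complex" where
  "number_coef q a n = a n * complex_of_real (if n = 0 then 0 else lam q n)"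

lemma max_dom_iff: "f \<in> max_dom q \<longleftrightarrow> f \<in> ML2 q \<and> ML2coef q (number_coef q (coef q f))"
  by (simp add: max_dom_def number_coef_def[abs_def])

lemma mlser_in_max_dom:
  "0 < q \<Longrightarrow> ML2coef q a \<Longrightarrow> ML2coef q (number_coef q a) \<Longrightarrow> mlser q a \<in> max_dom q"
  by (simp add: max_dom_iff coef_mlser ML2I)

lemma mlser_finite_support_in_max_dom:
  assumes "0 < q" and "\<And>n. N \<le> n \<Longrightarrow> a n = 0"
  shows "mlser q a \<in> max_dom q"
  using assms by (intro mlser_in_max_dom ML2coef_finite_support[of N]) (auto simp: number_coef_def)

lemma lam_pos:
  assumes "0 < q" "0 < n"
  shows "0 < lam q n"
  using assms unfolding lam_def by (intro divide_pos_pos Gamma_real_pos) (auto simp: add_nonneg_pos)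

lemma op_adag_mlser:
  assumes q: "0 < q" and b: "ML2coef q b"
  shows "op_adag q (mlser q b) = mlser q (\<lambda>n. case n of 0 \<Rightarrow> 0 | Suc m \<Rightarrow> b m)"
proof
  fix z
  show "op_adag q (mlser q b) z = mlser q (\<lambda>n. case n of 0 \<Rightarrow> 0 | Suc m \<Rightarrow> b m) z"
  proof (cases "z \<in> slit")
    case True
    define w where "w = z powr complex_of_real q"
    have "summable (\<lambda>n. (case n of 0 \<Rightarrow> 0 | Suc m \<Rightarrow> b m) * w ^ n)"
      using ML2coef_summable_powser[OF q b, of w]
      by (subst summable_powser_split_head[symmetric]) simp
    from powser_split_head(1)[OF this]
    show ?thesis
      using True by (simp add: op_adag_def mlser_eq_powser w_def mult.commute)
  qed (simp add: op_adag_def mlser_def)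
qed

lemma op_NN_eq:
  assumes q: "0 < q" and f: "f \<in> ML2 q" and a: "ML2coef q (\<lambda>n. number_coef q (coef q f) (Suc n))"
  shows "op_NN q f = mlser q (number_coef q (coef q f))"
proof -
  have "op_a q f = mlser q (\<lambda>n. number_coef q (coef q f) (Suc n))"
    by (simp add: op_a_def caputo_def number_coef_def)
  moreover have "(\<lambda>n. case n of 0 \<Rightarrow> 0 | Suc m \<Rightarrow> number_coef q (coef q f) (Suc m)) = number_coef q (coef q f)"
    by (auto simp: fun_eq_iff number_coef_def split: nat.split)
  ultimately show ?thesis
    unfolding op_NN_def by (simp add: op_adag_mlser[OF q a])
qed

lemma op_NN_max_dom:
  assumes q: "0 < q" and f: "f \<in> max_dom q"
  shows "op_NN q f = mlser q (number_coef q (coef q f))"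
  using f ML2coef_Suc[OF q] by (intro op_NN_eq[OF q]) (auto simp: max_dom_iff)

lemma coef_op_NN:
  assumes q: "0 < q" and f: "f \<in> max_dom q"
  shows "coef q (op_NN q f) = number_coef q (coef q f)"
  using f by (simp add: op_NN_max_dom[OF q f] coef_mlser[OF q] max_dom_iff)

lemma dom_NN_eq_max_dom:
  assumes q: "0 < q"
  shows "dom_NN q = max_dom q"
proof (intro equalityI subsetI)
  fix f assume "f \<in> dom_NN q"
  then have f: "f \<in> ML2 q" and a: "ML2coef q (\<lambda>n. number_coef q (coef q f) (Suc n))"
      and "op_NN q f \<in> ML2 q"
    by (auto simp: dom_NN_def dom_a_def dom_adag_def op_NN_def number_coef_def)
  then obtain d where d: "ML2coef q d" "mlser q (number_coef q (coef q f)) = mlser q d"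
    by (auto simp: op_NN_eq[OF q f a] ML2_def)
  txt \<open>Uniqueness of coefficients needs only convergence of the power series, which the
    lowered sequence provides.\<close>
  have "summable (\<lambda>n. number_coef q (coef q f) n * w ^ n)" for w
    using ML2coef_summable_powser[OF q a] summable_powser_split_head by blast
  then have "number_coef q (coef q f) = d"
    using mlser_inject[OF q _ ML2coef_summable_powser[OF q d(1)] d(2)] by blast
  then show "f \<in> max_dom q"
    using f d(1) by (simp add: max_dom_iff)
next
  fix f assume f: "f \<in> max_dom q"
  then have a: "ML2coef q (\<lambda>n. number_coef q (coef q f) (Suc n))"
    using ML2coef_Suc[OF q] by (auto simp: max_dom_iff)
  have "f \<in> dom_a q"
    using f a ML2coef_summable_sq[OF q a]
    by (auto simp: dom_a_def max_dom_iff number_coef_def norm_mult power_mult_distrib)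
  moreover have "op_a q f \<in> dom_adag q"
    using f a op_NN_eq[OF q _ a] by (auto simp: dom_adag_def op_NN_def op_a_def caputo_def number_coef_def ML2I max_dom_iff)
  ultimately show "f \<in> dom_NN q"
    by (simp add: dom_NN_def)
qed

lemma op_NN_mlser:
  assumes q: "0 < q" and a: "ML2coef q a" "ML2coef q (number_coef q a)"
  shows "op_NN q (mlser q a) = mlser q (number_coef q a)"
  using op_NN_max_dom[OF q mlser_in_max_dom[OF q a]] by (simp add: coef_mlser[OF q a(1)])

lemma max_dom_coefD:
  assumes "0 < q" "f \<in> max_dom q"
  shows "ML2coef q (coef q f)" "ML2coef q (number_coef q (coef q f))" "f = mlser q (coef q f)"
  using assms ML2_coefD by (auto simp: max_dom_iff)

lemma ket_span_eq_mlser: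
  "(\<lambda>z. \<Sum>k<N. c k * ket q k z)
     = mlser q (\<lambda>k. if k < N then c k / complex_of_real (sqrt (wt q k)) else 0)"
proof
  fix z
  show "(\<Sum>k<N. c k * ket q k z) = mlser q (\<lambda>k. if k < N then c k / complex_of_real (sqrt (wt q k)) else 0) z"
  proof (cases "z \<in> slit")
    case True
    have "(\<Sum>k. (if k < N then c k / complex_of_real (sqrt (wt q k)) else 0) * zq q k z)
        = (\<Sum>k<N. (if k < N then c k / complex_of_real (sqrt (wt q k)) else 0) * zq q k z)"
      by (rule suminf_finite) auto
    then show ?thesis
      using True by (simp add: mlser_def ket_def wt_def)
  qed (simp add: mlser_def ket_def)
qed

lemma ket_eq_sum: "ket q n = (\<lambda>z. \<Sum>k<Suc n. (if k = n then 1 else 0) * ket q k z)"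
  by (simp add: fun_eq_iff if_distrib)

lemma ket_in_ket_span: "ket q n \<in> ket_span q"
proof -
  have "(\<lambda>z. \<Sum>k<Suc n. (if k = n then 1 else 0) * ket q k z) \<in> ket_span q"
    unfolding ket_span_def
    by (rule CollectI, rule exI[of _ "Suc n"], rule exI[of _ "\<lambda>k. if k = n then 1 else 0"]) simp
  then show ?thesis
    by (subst ket_eq_sum)
qed

lemma ket_eq_mlser: "ket q n = mlser q (\<lambda>m. if m = n then 1 / complex_of_real (sqrt (wt q n)) else 0)"
  by (subst ket_eq_sum, unfold ket_span_eq_mlser) (rule arg_cong[where f = "mlser q"], auto)

lemma ket_span_subset_max_dom:
  assumes "0 < q"
  shows "ket_span q \<subseteq> max_dom q"
proof
  fix f assume "f \<in> ket_span q"
  then obtain N c where "f = (\<lambda>z. \<Sum>k<N. c k * ket q k z)"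
    by (auto simp: ket_span_def)
  then show "f \<in> max_dom q"
    using mlser_finite_support_in_max_dom[OF assms, of N] by (simp add: ket_span_eq_mlser)
qed

lemma op_NN_ket_span:
  assumes q: "0 < q"
  shows "op_NN q (\<lambda>z. \<Sum>k<N. c k * ket q k z)
       = (\<lambda>z. \<Sum>k<N. c k * complex_of_real (if k = 0 then 0 else lam q k) * ket q k z)"
proof -
  let ?a = "\<lambda>k. if k < N then c k / complex_of_real (sqrt (wt q k)) else 0"
  have a: "ML2coef q ?a"
    by (rule ML2coef_finite_support[of N]) simp
  have "number_coef q ?a
      = (\<lambda>k. if k < N then c k * complex_of_real (if k = 0 then 0 else lam q k) / complex_of_real (sqrt (wt q k)) else 0)"
    by (auto simp: fun_eq_iff number_coef_def)
  then show ?thesis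
    unfolding ket_span_eq_mlser
    using op_NN_max_dom[OF q mlser_finite_support_in_max_dom[OF q, of N ?a]] coef_mlser[OF q a]
    by simp
qed

lemma op_NN_ket:
  assumes "0 < q"
  shows "op_NN q (ket q n) = (\<lambda>z. complex_of_real (if n = 0 then 0 else lam q n) * ket q n z)"
proof -
  let ?ev = "\<lambda>k. complex_of_real (if k = 0 then 0 else lam q k)"
  have "op_NN q (ket q n) = (\<lambda>z. \<Sum>k<Suc n. (if k = n then 1 else 0) * ?ev k * ket q k z)"
    by (subst ket_eq_sum) (rule op_NN_ket_span[OF assms])
  also have "\<dots> = (\<lambda>z. \<Sum>k<Suc n. if k = n then ?ev k * ket q k z else 0)"
    by (intro ext sum.cong) auto
  finally show ?thesis
    by simp
qed

section \<open>Self-adjointness and positivity\<close>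

lemma max_dom_add:
  assumes q: "0 < q" and f: "f \<in> max_dom q" and g: "g \<in> max_dom q"
  shows "(\<lambda>z. f z + g z) \<in> max_dom q" and "op_NN q (\<lambda>z. f z + g z) = (\<lambda>z. op_NN q f z + op_NN q g z)"
proof -
  note a = max_dom_coefD[OF q f] and b = max_dom_coefD[OF q g]
  let ?c = "\<lambda>n. coef q f n + coef q g n"
  have sum: "(\<lambda>z. f z + g z) = mlser q ?c"
    by (subst a(3), subst b(3)) (rule mlser_add[OF q a(1) b(1), symmetric])
  have number: "number_coef q ?c = (\<lambda>n. number_coef q (coef q f) n + number_coef q (coef q g) n)"
    by (simp add: fun_eq_iff number_coef_def distrib_right)
  have c: "ML2coef q ?c" "ML2coef q (number_coef q ?c)"
    unfolding number by (intro ML2coef_add[OF q] a b)+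
  show "(\<lambda>z. f z + g z) \<in> max_dom q"
    unfolding sum by (rule mlser_in_max_dom[OF q c])
  show "op_NN q (\<lambda>z. f z + g z) = (\<lambda>z. op_NN q f z + op_NN q g z)"
    unfolding sum op_NN_mlser[OF q c] number op_NN_max_dom[OF q f] op_NN_max_dom[OF q g]
    by (rule mlser_add[OF q a(2) b(2)])
qed

lemma max_dom_cmult:
  assumes q: "0 < q" and f: "f \<in> max_dom q"
  shows "(\<lambda>z. c * f z) \<in> max_dom q" and "op_NN q (\<lambda>z. c * f z) = (\<lambda>z. c * op_NN q f z)"
proof -
  note a = max_dom_coefD[OF q f]
  let ?c = "\<lambda>n. c * coef q f n"
  have prod: "(\<lambda>z. c * f z) = mlser q ?c"
    by (subst a(3)) (rule mlser_cmult[OF q a(1), symmetric])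
  have number: "number_coef q ?c = (\<lambda>n. c * number_coef q (coef q f) n)"
    by (simp add: fun_eq_iff number_coef_def mult.assoc)
  have c: "ML2coef q ?c" "ML2coef q (number_coef q ?c)"
    unfolding number by (intro ML2coef_cmult a)+
  show "(\<lambda>z. c * f z) \<in> max_dom q"
    unfolding prod by (rule mlser_in_max_dom[OF q c])
  show "op_NN q (\<lambda>z. c * f z) = (\<lambda>z. c * op_NN q f z)"
    unfolding prod op_NN_mlser[OF q c] number op_NN_max_dom[OF q f]
    by (rule mlser_cmult[OF q a(2)])
qed

lemma lin_op_max_dom:
  assumes q: "0 < q"
  shows "lin_op q (max_dom q) (op_NN q)"
  unfolding lin_op_def
proof (intro conjI ballI allI)
  show "max_dom q \<subseteq> ML2 q"
    by (auto simp: max_dom_iff)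
  show "(\<lambda>z. 0) \<in> max_dom q"
  proof -
    have "mlser q (\<lambda>_. 0) = (\<lambda>z. 0)"
      by (simp add: mlser_def fun_eq_iff)
    then show ?thesis
      using mlser_finite_support_in_max_dom[OF q, of 0 "\<lambda>_. 0"] by simp
  qed
  fix f assume f: "f \<in> max_dom q"
  show "op_NN q f \<in> ML2 q"
    using max_dom_coefD(2)[OF q f] by (simp add: op_NN_max_dom[OF q f] ML2I)
  fix c
  show "(\<lambda>z. c * f z) \<in> max_dom q" "op_NN q (\<lambda>z. c * f z) = (\<lambda>z. c * op_NN q f z)"
    using max_dom_cmult[OF q f] by auto
next
  fix f g assume "f \<in> max_dom q" "g \<in> max_dom q"
  then show "(\<lambda>z. f z + g z) \<in> max_dom q" "op_NN q (\<lambda>z. f z + g z) = (\<lambda>z. op_NN q f z + op_NN q g z)"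
    using max_dom_add[OF q] by auto
qed

lemma max_dom_dense:
  assumes q: "0 < q" and f: "f \<in> ML2 q" and e: "0 < e"
  shows "\<exists>g\<in>max_dom q. ml_norm q (\<lambda>z. f z - g z) < e"
proof -
  let ?a = "coef q f"
  define x where "x n = (cmod (?a n))\<^sup>2 * wt q n" for n
  have x: "summable x"
    using ML2_coefD(1)[OF q f] unfolding ML2coef_def x_def .
  obtain N where N: "norm (\<Sum>i. x (i + N)) < e\<^sup>2"
    using suminf_exist_split[OF _ x, of "e\<^sup>2"] e by auto
  define t where "t n = (if n < N then ?a n else 0)" for n
  define h where "h n = (if n < N then 0 else ?a n)" for n
  have t: "ML2coef q t"
    by (rule ML2coef_finite_support[of N]) (simp add: t_def)
  have h_eq: "h = (\<lambda>n. ?a n - t n)"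
    by (simp add: fun_eq_iff h_def t_def)
  have h: "ML2coef q h"
    unfolding h_eq by (rule ML2coef_diff[OF q ML2_coefD(1)[OF q f] t])
  have "(\<lambda>z. f z - mlser q t z) = mlser q h"
    unfolding h_eq by (subst (1) ML2_coefD(2)[OF q f]) (rule mlser_diff[OF q ML2_coefD(1)[OF q f] t, symmetric])
  moreover have "(\<Sum>n. (cmod (h n))\<^sup>2 * wt q n) = (\<Sum>i. x (i + N))"
    using suminf_split_initial_segment[OF h[unfolded ML2coef_def], of N] by (simp add: h_def x_def)
  moreover have "sqrt (\<Sum>i. x (i + N)) < e"
  proof -
    have "0 \<le> (\<Sum>i. x (i + N))"
      using wt_pos[OF q] by (intro suminf_nonneg summable_ignore_initial_segment[OF x]) (simp add: x_def less_imp_le)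
    then show ?thesis
      using real_sqrt_less_mono[of _ "e\<^sup>2"] N e by simp
  qed
  ultimately have "ml_norm q (\<lambda>z. f z - mlser q t z) < e"
    by (simp add: ml_norm_mlser[OF q h])
  then show ?thesis
    using e mlser_finite_support_in_max_dom[OF q, of N t] by (auto simp: t_def)
qed

lemma op_NN_symmetric:
  assumes q: "0 < q" and f: "f \<in> max_dom q" and g: "g \<in> max_dom q"
  shows "ml_inner q (op_NN q f) g = ml_inner q f (op_NN q g)"
  unfolding ml_inner_def coef_op_NN[OF q f] coef_op_NN[OF q g]
  by (simp add: number_coef_def mult_ac)

lemma ml_inner_single:
  assumes "\<And>m. m \<noteq> n \<Longrightarrow> coef q f m = 0"
  shows "ml_inner q f g = cnj (coef q f n) * coef q g n * complex_of_real (wt q n)"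
  unfolding ml_inner_def using assms by (subst suminf_finite[of "{n}"]) auto

lemma op_NN_maximal:
  assumes q: "0 < q" and g: "g \<in> ML2 q" and h: "h \<in> ML2 q"
    and adjoint: "\<forall>f\<in>max_dom q. ml_inner q (op_NN q f) g = ml_inner q f h"
  shows "g \<in> max_dom q \<and> op_NN q g = h"
proof -
  have "coef q h n = number_coef q (coef q g) n" for n
  proof -
    let ?e = "\<lambda>m. if m = n then 1 / complex_of_real (sqrt (wt q n)) else 0"
    have ket: "ket q n \<in> max_dom q" "coef q (ket q n) = ?e"
      unfolding ket_eq_mlser
      by (rule mlser_finite_support_in_max_dom[OF q, of "Suc n"], simp, rule coef_mlser[OF q])
         (rule ML2coef_finite_support[of "Suc n"], simp)
    txt \<open>Testing the adjoint relation against \<open>|n\<^sub>q\<rangle>\<close> reads off the \<open>n\<close>-th coefficient of \<open>h\<close>.\<close>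
    have "ml_inner q (op_NN q (ket q n)) g
        = cnj (coef q (op_NN q (ket q n)) n) * coef q g n * complex_of_real (wt q n)"
      by (rule ml_inner_single) (simp add: coef_op_NN[OF q ket(1)] ket(2) number_coef_def)
    moreover have "ml_inner q (ket q n) h = cnj (coef q (ket q n) n) * coef q h n * complex_of_real (wt q n)"
      by (rule ml_inner_single) (simp add: ket(2))
    ultimately have "cnj (number_coef q ?e n) * coef q g n * complex_of_real (wt q n)
        = cnj (?e n) * coef q h n * complex_of_real (wt q n)"
      using adjoint ket by (simp add: coef_op_NN[OF q ket(1)])
    then show ?thesis
      using wt_pos[OF q, of n] by (cases "n = 0") (auto simp: number_coef_def mult.commute)
  qed
  then have coef_h: "coef q h = number_coef q (coef q g)"
    by auto
  have "g \<in> max_dom q"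
    using g ML2_coefD(1)[OF q h] by (simp add: max_dom_iff coef_h)
  moreover have "op_NN q g = h"
    using ML2_coefD(2)[OF q h] by (simp add: op_NN_max_dom[OF q \<open>g \<in> max_dom q\<close>] coef_h)
  ultimately show ?thesis ..
qed

lemma op_NN_nonneg:
  assumes q: "0 < q" and f: "f \<in> max_dom q"
  shows "Im (ml_inner q f (op_NN q f)) = 0 \<and> 0 \<le> Re (ml_inner q f (op_NN q f))"
proof -
  note a = max_dom_coefD[OF q f]
  define r where "r n = (cmod (coef q f n))\<^sup>2 * (if n = 0 then 0 else lam q n) * wt q n" for n
  have r_nonneg: "0 \<le> r n" for n
    using lam_pos[OF q, of n] wt_pos[OF q, of n] by (auto simp: r_def intro!: mult_nonneg_nonneg)
  have terms: "(\<lambda>n. cnj (coef q f n) * number_coef q (coef q f) n * complex_of_real (wt q n))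
      = (\<lambda>n. complex_of_real (r n))"
    by (simp only: r_def number_coef_def of_real_mult complex_norm_square mult_ac)
  have r: "summable r"
    using ML2coef_summable_inner[OF q a(1,2)] by (simp add: terms)
  have "ml_inner q f (op_NN q f) = complex_of_real (\<Sum>n. r n)"
    unfolding ml_inner_def coef_op_NN[OF q f] terms by (rule suminf_of_real[OF r, symmetric])
  moreover have "0 \<le> (\<Sum>n. r n)"
    by (rule suminf_nonneg[OF r r_nonneg])
  ultimately show ?thesis
    by (simp only: Im_complex_of_real Re_complex_of_real)
qed

lemma self_adjoint_op_NN:
  assumes q: "0 < q"
  shows "self_adjoint q (max_dom q) (op_NN q)"
  unfolding self_adjoint_def
  using lin_op_max_dom[OF q] max_dom_dense[OF q] op_NN_symmetric[OF q] op_NN_maximal[OF q] by blast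

lemma positive_op_NN:
  assumes q: "0 < q"
  shows "positive_op q (max_dom q) (op_NN q)"
  unfolding positive_op_def using op_NN_nonneg[OF q] by blast

lemma op_NN_eq_series:
  assumes q: "0 < q" and f: "f \<in> max_dom q" and z: "z \<in> slit"
  shows "op_NN q f z = (\<Sum>n. coef q f (Suc n) * complex_of_real (lam q (Suc n)) * zq q (Suc n) z)"
proof -
  let ?c = "number_coef q (coef q f)"
  have "z \<noteq> 0"
    using z by (auto simp: slit_def)
  then have "summable (\<lambda>n. ?c n * zq q n z)"
    using ML2coef_summable_powser[OF q max_dom_coefD(2)[OF q f]] by (simp add: zq_eq_power)
  from suminf_split_head[OF this]
  have "(\<Sum>n. ?c n * zq q n z) = (\<Sum>n. ?c (Suc n) * zq q (Suc n) z)"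
    by (simp add: number_coef_def)
  then show ?thesis
    using z by (simp add: op_NN_max_dom[OF q f] mlser_def number_coef_def)
qed

theorem mainTheorem3:
  fixes q :: real
  assumes "q > 0"
  shows "(\<forall>n. ket q n \<in> dom_NN q)
    \<and> (\<forall>n. op_NN q (ket q n) =
           (if n \<ge> 1 then (\<lambda>z. complex_of_real (lam q n) * ket q n z) else (\<lambda>z. 0)))
    \<and> (ket_span q \<subseteq> dom_NN q
       \<and> (\<forall>N c. op_NN q (\<lambda>z. \<Sum>k<N. c k * ket q k z)
              = (\<lambda>z. \<Sum>k<N. c k * complex_of_real (if k = 0 then 0 else lam q k) * ket q k z))
       \<and> self_adjoint q (dom_NN q) (op_NN q)
       \<and> positive_op q (dom_NN q) (op_NN q)
       \<and> dom_NN q = max_dom q)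
    \<and> (\<forall>f \<in> dom_NN q. \<forall>z \<in> slit.
         op_NN q f z = (\<Sum>n. coef q f (Suc n) * complex_of_real (lam q (Suc n)) * zq q (Suc n) z))"
proof -
  note q = \<open>q > 0\<close>
  have "\<forall>n. ket q n \<in> max_dom q"
    using ket_in_ket_span ket_span_subset_max_dom[OF q] by blast
  moreover have "\<forall>n. op_NN q (ket q n)
      = (if n \<ge> 1 then (\<lambda>z. complex_of_real (lam q n) * ket q n z) else (\<lambda>z. 0))"
    by (simp add: op_NN_ket[OF q])
  moreover have "\<forall>N c. op_NN q (\<lambda>z. \<Sum>k<N. c k * ket q k z)
      = (\<lambda>z. \<Sum>k<N. c k * complex_of_real (if k = 0 then 0 else lam q k) * ket q k z)"
    by (intro allI) (rule op_NN_ket_span[OF q])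
  moreover have "\<forall>f \<in> max_dom q. \<forall>z \<in> slit.
      op_NN q f z = (\<Sum>n. coef q f (Suc n) * complex_of_real (lam q (Suc n)) * zq q (Suc n) z)"
    by (intro ballI) (rule op_NN_eq_series[OF q])
  ultimately show ?thesis
    unfolding dom_NN_eq_max_dom[OF q]
    using ket_span_subset_max_dom[OF q] self_adjoint_op_NN[OF q] positive_op_NN[OF q]
    by (intro conjI refl) assumption+
qed

end
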